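(* Let $n\ge2$ and $1\le\ell\le s$ be integers, and consider the saturation SQGT model with thresholds $(1,2,\dots,s)$, in which a test $\mathbf{x}\in\{0,1\}^n$ applied to $\mathbf{b}$ returns $\min(\mathbf{x}\cdot\mathbf{b},s)$. Let $m=\lceil\log_2 n\rceil$ and let $\mathbf{N}$ be the $(m+1)\times n$ binary matrix with $\mathbf{N}(r,j)$ equal to the $r$-th binary digit of $j$ (i.e. $\lfloor j/2^r\rfloor\bmod2$) for $0\le r<m$, $0\le j<n$, and whose last row is all ones. Then $\mathbf{N}$ solves $\mathrm{Burst}(n,\le\ell,\underline{\eta})$: any two distinct bursts in $\{0,1\}^n$ of lengths between $1$ and $\ell$ yield distinct outcome vectors. Thus $\lceil\log_2 n\rceil+1$ measurements suffice.
   Context: Items are indexed $0,\dots,n-1$. A burst with head $a$ and tail $t$ ($0\le a\le t\le n-1$) is the vector in $\{0,1\}^n$ whose $j$-th coordinate is $1$ iff $a\le j\le t$; its length is $t-a+1$. $\mathrm{Burst}(n,\le\ell,\underline{\eta})$ is the problem of identifying an unknown burst of length in $\{1,\dots,\ell\}$ from the outcome vector (entrywise outcomes of the rows of the test matrix). *)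

theory Defs
  imports Complex_Main
begin

text \<open>Burst with head a and tail t, as a 0/1 vector indexed by nat (relevant indices 0..n-1).\<close>
definition burst :: "nat \<Rightarrow> nat \<Rightarrow> nat \<Rightarrow> nat" where
  "burst a t j = (if a \<le> j \<and> j \<le> t then 1 else 0)"

definition mrows :: "nat \<Rightarrow> nat" where
  "mrows n = nat \<lceil>log 2 (real n)\<rceil>"

definition Nmat :: "nat \<Rightarrow> nat \<Rightarrow> nat \<Rightarrow> nat" where
  "Nmat n r j = (if r < mrows n then (j div 2 ^ r) mod 2 else 1)"

definition sat_outcome :: "nat \<Rightarrow> nat \<Rightarrow> (nat \<Rightarrow> nat) \<Rightarrow> (nat \<Rightarrow> nat) \<Rightarrow> nat" where
  "sat_outcome n s x b = min (\<Sum>j<n. x j * b j) s"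

definition outcome_vec :: "nat \<Rightarrow> nat \<Rightarrow> (nat \<Rightarrow> nat) \<Rightarrow> nat list" where
  "outcome_vec n s b = map (\<lambda>r. sat_outcome n s (Nmat n r) b) [0..<mrows n + 1]"

end

theory Submission
  imports Defs
begin

text \<open>The first \<open>m\<close> rows of \<open>N\<close> report the number of ones in the burst at each binary digit
  position; weighting row \<open>r\<close> by \<open>2^r\<close> recovers the sum of the positions in the burst, and the
  all-ones row recovers its length. Since no burst is longer than \<open>s\<close>, no outcome saturates.
  A burst of length \<open>k\<close> starting at \<open>a\<close> has position sum \<open>k a + k(k-1)/2\<close>, so length and
  position sum determine the burst.\<close>

lemma sum_binary_digits:
  "(\<Sum>r<m. 2 ^ r * ((j::nat) div 2 ^ r mod 2)) = j mod 2 ^ m"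
proof (induction m)
  case 0
  then show ?case by simp
next
  case (Suc m)
  have "j mod 2 ^ Suc m = j mod (2 ^ m * 2)" by (simp add: mult.commute)
  also have "\<dots> = 2 ^ m * (j div 2 ^ m mod 2) + j mod 2 ^ m" by (rule mod_mult2_eq)
  finally show ?case using Suc by simp
qed

lemma le_two_power_mrows: "n \<le> 2 ^ mrows n"
proof (cases "n = 0")
  case False
  then have log_nonneg: "log 2 (real n) \<ge> 0" by simp
  have "real n = 2 powr log 2 (real n)" using False by simp
  also have "\<dots> \<le> 2 powr real_of_int \<lceil>log 2 (real n)\<rceil>"
    by (rule powr_mono) auto
  also have "real_of_int \<lceil>log 2 (real n)\<rceil> = real (mrows n)"
    unfolding mrows_def using log_nonneg by simp
  also have "2 powr real (mrows n) = 2 ^ mrows n" by (simp add: powr_realpow)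
  finally show ?thesis by (metis of_nat_le_iff of_nat_numeral of_nat_power)
qed simp

lemma Nmat_le_1: "Nmat n r j \<le> 1"
proof -
  have "j div 2 ^ r mod 2 \<le> (1::nat)" by simp
  then show ?thesis unfolding Nmat_def by (cases "r < mrows n") simp_all
qed

lemma sum_mult_burst:
  assumes "t < n"
  shows "(\<Sum>j<n. f j * burst a t j) = sum f {a..t}"
proof -
  have "(\<Sum>j<n. f j * burst a t j) = (\<Sum>j<n. if j \<in> {a..t} then f j else 0)"
    by (rule sum.cong) (auto simp: burst_def)
  also have "\<dots> = sum f ({..<n} \<inter> {a..t})" by (simp add: sum.inter_restrict)
  also have "{..<n} \<inter> {a..t} = {a..t}" using assms by auto
  finally show ?thesis .
qed

lemma sat_outcome_burst:
  assumes "t < n" and "\<And>j. x j \<le> 1" and "t - a + 1 \<le> s"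
  shows "sat_outcome n s x (burst a t) = sum x {a..t}"
proof -
  have "sum x {a..t} \<le> sum (\<lambda>_. 1) {a..t}" by (rule sum_mono) (use assms(2) in auto)
  then have "sum x {a..t} \<le> s" using assms(3) by simp
  then show ?thesis unfolding sat_outcome_def sum_mult_burst[OF assms(1)] by simp
qed

lemma sat_outcome_last_row:
  assumes "a \<le> t" and "t < n" and "t - a + 1 \<le> s"
  shows "sat_outcome n s (Nmat n (mrows n)) (burst a t) = t - a + 1"
  using sat_outcome_burst[OF assms(2), of "Nmat n (mrows n)", OF Nmat_le_1 assms(3)] assms(1)
  by (simp add: Nmat_def)

lemma sum_index_by_digit_rows:
  "(\<Sum>j<n. j * b j) = (\<Sum>r<mrows n. 2 ^ r * (\<Sum>j<n. Nmat n r j * b j))"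
proof -
  have "(\<Sum>j<n. j * b j) = (\<Sum>j<n. (\<Sum>r<mrows n. 2 ^ r * (j div 2 ^ r mod 2)) * b j)"
  proof (rule sum.cong)
    fix j assume "j \<in> {..<n}"
    then have "j mod 2 ^ mrows n = j"
      using le_two_power_mrows[of n] by simp
    then show "j * b j = (\<Sum>r<mrows n. 2 ^ r * (j div 2 ^ r mod 2)) * b j"
      by (simp add: sum_binary_digits)
  qed simp
  also have "\<dots> = (\<Sum>j<n. \<Sum>r<mrows n. 2 ^ r * (Nmat n r j * b j))"
    by (simp add: sum_distrib_right Nmat_def mult.assoc)
  also have "\<dots> = (\<Sum>r<mrows n. 2 ^ r * (\<Sum>j<n. Nmat n r j * b j))"
    by (subst sum.swap) (simp add: sum_distrib_left)
  finally show ?thesis .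
qed

lemma sum_atLeastAtMost_shift:
  fixes a t :: nat
  assumes "a \<le> t"
  shows "\<Sum>{a..t} = (t - a + 1) * a + \<Sum>{0..t - a}"
proof -
  have "{a..t} = {0 + a..(t - a) + a}" using assms by simp
  then have "\<Sum>{a..t} = (\<Sum>i = 0..t - a. i + a)"
    by (simp only: sum.shift_bounds_cl_nat_ivl)
  also have "\<dots> = \<Sum>{0..t - a} + (t - a + 1) * a" by (simp add: sum.distrib)
  finally show ?thesis by simp
qed

lemma interval_eq_of_length_sum_eq:
  fixes a t a' t' :: nat
  assumes "a \<le> t" and "a' \<le> t'" and "t - a = t' - a'" and "\<Sum>{a..t} = \<Sum>{a'..t'}"
  shows "a = a'" and "t = t'"
proof -
  have "(t - a + 1) * a = (t - a + 1) * a'"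
    using assms sum_atLeastAtMost_shift[OF assms(1)] sum_atLeastAtMost_shift[OF assms(2)]
    by simp
  then show "a = a'" by (metis add_gr_0 less_one mult_left_cancel not_gr_zero)
  then show "t = t'" using assms(1-3) by simp
qed

theorem mainTheorem9:
  fixes n l s a t a' t' :: nat
  assumes "n \<ge> 2" and "1 \<le> l" and "l \<le> s"
    and "a \<le> t" and "t \<le> n - 1" and "t - a + 1 \<le> l"
    and "a' \<le> t'" and "t' \<le> n - 1" and "t' - a' + 1 \<le> l"
    and "map (burst a t) [0..<n] \<noteq> map (burst a' t') [0..<n]"
  shows "outcome_vec n s (burst a t) \<noteq> outcome_vec n s (burst a' t')"
proof
  assume "outcome_vec n s (burst a t) = outcome_vec n s (burst a' t')"
  then have rows: "sat_outcome n s (Nmat n r) (burst a t) = sat_outcome n s (Nmat n r) (burst a' t')"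
    if "r \<le> mrows n" for r
    using that unfolding outcome_vec_def map_eq_conv by auto
  have bounds: "t < n" "t' < n" "t - a + 1 \<le> s" "t' - a' + 1 \<le> s" using assms by auto
  have length_eq: "t - a = t' - a'"
    using rows[of "mrows n"] sat_outcome_last_row[OF assms(4) bounds(1,3)]
      sat_outcome_last_row[OF assms(7) bounds(2,4)] by simp
  have "(\<Sum>j<n. Nmat n r j * burst a t j) = (\<Sum>j<n. Nmat n r j * burst a' t' j)"
    if "r \<le> mrows n" for r
    unfolding sum_mult_burst[OF bounds(1)] sum_mult_burst[OF bounds(2)]
      sat_outcome_burst[OF bounds(1) Nmat_le_1 bounds(3), symmetric]
      sat_outcome_burst[OF bounds(2) Nmat_le_1 bounds(4), symmetric]
    using rows[OF that] .
  then have "(\<Sum>j<n. j * burst a t j) = (\<Sum>j<n. j * burst a' t' j)"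
    unfolding sum_index_by_digit_rows by (intro sum.cong) auto
  then have "\<Sum>{a..t} = \<Sum>{a'..t'}"
    using sum_mult_burst[OF bounds(1), of id] sum_mult_burst[OF bounds(2), of id] by simp
  with interval_eq_of_length_sum_eq[OF assms(4,7) length_eq] assms(10) show False
    by simp
qed

end
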